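(* Let $G$ be a connected graph with girth $g(G)=4$ and let $(x,y)\in E(G)$ with $d_x=d_y=d$. Then $\kappa(x,y)=0$ if and only if there is a perfect matching between $N_G(x)$ and $N_G(y)$, i.e. a bijection $\sigma:N_G(x)\to N_G(y)$ with $(a,\sigma(a))\in E(G)$ for all $a\in N_G(x)$.
   Context: Graphs are locally finite and unweighted; the girth is the length of a shortest cycle. $d_G$ is the shortest-path metric, $N_G(v)$ the neighbour set and $d_v$ the degree of $v$; $m_v$ is the uniform probability measure on $N_G(v)$, and for an edge $(x,y)$, $\kappa(x,y)=1-W_1(m_x,m_y)$, where $W_1$ is the Wasserstein-1 (transportation) distance with respect to $d_G$. *)

theory Defs
  imports Complex_Main "HOL-Library.Extended_Nat"
begin

definition simple_graph :: "('a \<Rightarrow> 'a \<Rightarrow> bool) \<Rightarrow> bool" where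
  "simple_graph E \<longleftrightarrow> (\<forall>x y. E x y \<longrightarrow> E y x) \<and> (\<forall>x. \<not> E x x)"

definition nbhd :: "('a \<Rightarrow> 'a \<Rightarrow> bool) \<Rightarrow> 'a \<Rightarrow> 'a set" where
  "nbhd E x = {y. E x y}"

definition degree :: "('a \<Rightarrow> 'a \<Rightarrow> bool) \<Rightarrow> 'a \<Rightarrow> nat" where
  "degree E x = card (nbhd E x)"

definition locally_finite :: "('a \<Rightarrow> 'a \<Rightarrow> bool) \<Rightarrow> bool" where
  "locally_finite E \<longleftrightarrow> (\<forall>x. finite (nbhd E x))"

definition walk :: "('a \<Rightarrow> 'a \<Rightarrow> bool) \<Rightarrow> 'a list \<Rightarrow> bool" where
  "walk E p \<longleftrightarrow> p \<noteq> [] \<and> (\<forall>i. Suc i < length p \<longrightarrow> E (p ! i) (p ! Suc i))"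

definition connected_graph :: "('a \<Rightarrow> 'a \<Rightarrow> bool) \<Rightarrow> bool" where
  "connected_graph E \<longleftrightarrow> (\<forall>x y. \<exists>p. walk E p \<and> hd p = x \<and> last p = y)"

text \<open>Shortest-path distance (number of edges); meaningful for connected graphs.\<close>
definition gdist :: "('a \<Rightarrow> 'a \<Rightarrow> bool) \<Rightarrow> 'a \<Rightarrow> 'a \<Rightarrow> nat" where
  "gdist E x y = (LEAST n. \<exists>p. walk E p \<and> hd p = x \<and> last p = y \<and> length p = Suc n)"

definition cycle :: "('a \<Rightarrow> 'a \<Rightarrow> bool) \<Rightarrow> 'a list \<Rightarrow> bool" where
  "cycle E c \<longleftrightarrow> length c \<ge> 3 \<and> distinct c \<and> walk E c \<and> E (last c) (hd c)"

text \<open>Girth = length of a shortest cycle (infinity if acyclic).\<close>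
definition girth :: "('a \<Rightarrow> 'a \<Rightarrow> bool) \<Rightarrow> enat" where
  "girth E = Inf {enat (length c) | c. cycle E c}"

text \<open>Wasserstein-1 distance between finitely supported probability measures
  \<mu> (supported in S) and \<nu> (supported in T), w.r.t. the cost d: infimum over
  transport plans (couplings) of the transport cost.\<close>
definition coupling :: "'a set \<Rightarrow> ('a \<Rightarrow> real) \<Rightarrow> 'a set \<Rightarrow> ('a \<Rightarrow> real) \<Rightarrow> ('a \<Rightarrow> 'a \<Rightarrow> real) \<Rightarrow> bool" where
  "coupling S \<mu> T \<nu> \<pi> \<longleftrightarrow>
     (\<forall>u v. \<pi> u v \<ge> 0) \<and> (\<forall>u v. (u \<notin> S \<or> v \<notin> T) \<longrightarrow> \<pi> u v = 0) \<and>
     (\<forall>u\<in>S. (\<Sum>v\<in>T. \<pi> u v) = \<mu> u) \<and> (\<forall>v\<in>T. (\<Sum>u\<in>S. \<pi> u v) = \<nu> v)"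

definition wasserstein1 :: "('a \<Rightarrow> 'a \<Rightarrow> real) \<Rightarrow> 'a set \<Rightarrow> ('a \<Rightarrow> real) \<Rightarrow> 'a set \<Rightarrow> ('a \<Rightarrow> real) \<Rightarrow> real" where
  "wasserstein1 d S \<mu> T \<nu> =
     Inf {(\<Sum>u\<in>S. \<Sum>v\<in>T. \<pi> u v * d u v) | \<pi>. coupling S \<mu> T \<nu> \<pi>}"

definition unif_nbhd :: "('a \<Rightarrow> 'a \<Rightarrow> bool) \<Rightarrow> 'a \<Rightarrow> 'a \<Rightarrow> real" where
  "unif_nbhd E x u = (if u \<in> nbhd E x then 1 / real (degree E x) else 0)"

definition ollivier_curv :: "('a \<Rightarrow> 'a \<Rightarrow> bool) \<Rightarrow> 'a \<Rightarrow> 'a \<Rightarrow> real" where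
  "ollivier_curv E x y = 1 - wasserstein1 (\<lambda>u v. real (gdist E u v))
      (nbhd E x) (unif_nbhd E x) (nbhd E y) (unif_nbhd E y)"

end

theory Submission
  imports Defs
begin

text \<open>Without triangles the neighbourhoods of x and y are disjoint, so every unit of mass
  travels distance at least 1, and exactly 1 only along edges between N(x) and N(y); hence
  W1(m_x, m_y) \<ge> 1, with equality for the transport plan of a perfect matching. If there is
  no perfect matching, Hall's theorem yields S \<subseteq> N(x) whose neighbourhood in N(y) is smaller
  than S. The mass leaving S along edges is at most |N(S) \<inter> N(y)|/d, so at least 1/d of the
  total mass travels distance at least 2, and W1(m_x, m_y) \<ge> 1 + 1/d.\<close>

definition hall_condition :: "'a set \<Rightarrow> ('a \<Rightarrow> 'b set) \<Rightarrow> bool" where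
  "hall_condition A N \<longleftrightarrow> (\<forall>S\<subseteq>A. card S \<le> card (\<Union>(N ` S)))"

lemma hall_condition_subset:
  "hall_condition A N \<Longrightarrow> B \<subseteq> A \<Longrightarrow> hall_condition B N"
  unfolding hall_condition_def by blast

lemma hall_condition_nonempty:
  "hall_condition A N \<Longrightarrow> a \<in> A \<Longrightarrow> N a \<noteq> {}"
  unfolding hall_condition_def by (force dest: spec[of _ "{a}"])

lemma hall_condition_Diff_critical:
  assumes hall: "hall_condition A N" and "S \<subseteq> A" and "finite A"
    and critical: "card (\<Union>(N ` S)) = card S"
  shows "hall_condition (A - S) (\<lambda>a. N a - \<Union>(N ` S))"
  unfolding hall_condition_def
proof (intro allI impI)
  fix T assume T: "T \<subseteq> A - S"
  have TS: "T \<union> S \<subseteq> A" "T \<inter> S = {}"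
    using T \<open>S \<subseteq> A\<close> by auto
  have "card T + card S = card (T \<union> S)"
    using TS \<open>finite A\<close> by (intro card_Un_disjoint[symmetric]) (auto intro: rev_finite_subset)
  also have "\<dots> \<le> card (\<Union>(N ` (T \<union> S)))"
    using hall TS(1) unfolding hall_condition_def by blast
  also have "\<Union>(N ` (T \<union> S)) = (\<Union>a\<in>T. N a - \<Union>(N ` S)) \<union> \<Union>(N ` S)"
    by auto
  also have "card \<dots> \<le> card (\<Union>a\<in>T. N a - \<Union>(N ` S)) + card S"
    using card_Un_le[of "\<Union>a\<in>T. N a - \<Union>(N ` S)" "\<Union>(N ` S)"] critical by simp
  finally show "card T \<le> card (\<Union>a\<in>T. N a - \<Union>(N ` S))"
    by simp
qed

lemma hall_condition_Diff_singleton: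
  assumes surplus: "\<And>S. S \<subseteq> A \<Longrightarrow> S \<noteq> {} \<Longrightarrow> S \<noteq> A \<Longrightarrow> card S < card (\<Union>(N ` S))"
    and "a \<in> A"
  shows "hall_condition (A - {a}) (\<lambda>c. N c - {b})"
  unfolding hall_condition_def
proof (intro allI impI)
  fix T assume T: "T \<subseteq> A - {a}"
  show "card T \<le> card (\<Union>c\<in>T. N c - {b})"
  proof (cases "T = {}")
    case False
    then have "card T < card (\<Union>(N ` T))"
      using surplus T \<open>a \<in> A\<close> by blast
    moreover have "(\<Union>c\<in>T. N c - {b}) = \<Union>(N ` T) - {b}"
      by blast
    ultimately show ?thesis
      by (auto simp: card_Diff_singleton_if)
  qed simp
qed

text \<open>Halmos--Vaughan induction: a proper nonempty critical set S (with |N(S)| = |S|) splits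
  the problem into S and A - S with N(S) removed; if there is none, every set has surplus and
  any single pair a, b with b \<in> N a can be fixed first.\<close>

theorem hall_marriage:
  assumes "finite A" and "hall_condition A N"
  shows "\<exists>f. inj_on f A \<and> (\<forall>a\<in>A. f a \<in> N a)"
  using assms
proof (induction "card A" arbitrary: A N rule: less_induct)
  case less
  show ?case
  proof (cases "\<exists>S. S \<subseteq> A \<and> S \<noteq> {} \<and> S \<noteq> A \<and> card (\<Union>(N ` S)) \<le> card S")
    case True
    then obtain S where S: "S \<subseteq> A" "S \<noteq> {}" "S \<noteq> A" and tight: "card (\<Union>(N ` S)) \<le> card S"
      by blast
    have "finite S"
      using S(1) less.prems(1) by (rule finite_subset)
    have critical: "card (\<Union>(N ` S)) = card S"
      using tight less.prems(2) S(1) unfolding hall_condition_def by (meson le_antisym)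
    have "card S < card A"
      using S less.prems(1) by (intro psubset_card_mono) auto
    have "card (A - S) < card A"
      using S less.prems(1) by (intro psubset_card_mono) auto
    obtain f where f: "inj_on f S" "\<forall>a\<in>S. f a \<in> N a"
      using less.hyps[OF \<open>card S < card A\<close> \<open>finite S\<close>]
        hall_condition_subset[OF less.prems(2) S(1)] by blast
    obtain g where g: "inj_on g (A - S)" "\<forall>a\<in>A - S. g a \<in> N a - \<Union>(N ` S)"
      using less.hyps[OF \<open>card (A - S) < card A\<close> finite_Diff[OF less.prems(1)]]
        hall_condition_Diff_critical[OF less.prems(2) S(1) less.prems(1) critical] by blast
    define h where "h a = (if a \<in> S then f a else g a)" for a
    have "f ` S \<inter> g ` (A - S) = {}"
      using f(2) g(2) by fastforce
    then have "inj_on h (S \<union> (A - S))"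
      unfolding h_def using f(1) g(1) by (intro inj_on_disjoint_Un)
    moreover have "S \<union> (A - S) = A"
      using S(1) by blast
    moreover have "h a \<in> N a" if "a \<in> A" for a
      using f(2) g(2) that unfolding h_def by auto
    ultimately show ?thesis
      by auto
  next
    case no_tight: False
    show ?thesis
    proof (cases "A = {}")
      case False
      then obtain a where "a \<in> A"
        by blast
      then obtain b where "b \<in> N a"
        using hall_condition_nonempty[OF less.prems(2) \<open>a \<in> A\<close>] by blast
      have "card (A - {a}) < card A"
        using \<open>a \<in> A\<close> less.prems(1) by (intro psubset_card_mono) auto
      moreover have "hall_condition (A - {a}) (\<lambda>c. N c - {b})"
      proof (rule hall_condition_Diff_singleton[OF _ \<open>a \<in> A\<close>])
        fix S assume "S \<subseteq> A" "S \<noteq> {}" "S \<noteq> A"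
        then show "card S < card (\<Union>(N ` S))"
          using no_tight by (meson not_le)
      qed
      ultimately obtain g where g: "inj_on g (A - {a})" "\<forall>c\<in>A - {a}. g c \<in> N c - {b}"
        using less.hyps[OF _ finite_Diff[OF less.prems(1)]] by blast
      have "b \<notin> g ` (A - {a})"
        using g(2) by blast
      then have "inj_on (g(a := b)) A"
        using g(1) unfolding inj_on_def by (metis DiffI fun_upd_other fun_upd_same image_eqI singletonD)
      moreover have "(g(a := b)) c \<in> N c" if "c \<in> A" for c
        using g(2) \<open>b \<in> N a\<close> that by auto
      ultimately show ?thesis
        by auto
    qed simp
  qed
qed

lemma perfect_matching_if_hall_condition:
  assumes "finite X" and "finite Y" and "card X = card Y"
    and "hall_condition X (\<lambda>a. {v \<in> Y. R a v})"
  shows "\<exists>\<sigma>. bij_betw \<sigma> X Y \<and> (\<forall>a\<in>X. R a (\<sigma> a))"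
proof -
  obtain \<sigma> where \<sigma>: "inj_on \<sigma> X" "\<forall>a\<in>X. \<sigma> a \<in> {v \<in> Y. R a v}"
    using hall_marriage[OF assms(1,4)] by blast
  have "\<sigma> ` X \<subseteq> Y"
    using \<sigma>(2) by blast
  moreover have "card (\<sigma> ` X) = card Y"
    using card_image[OF \<sigma>(1)] assms(3) by simp
  ultimately have "\<sigma> ` X = Y"
    using card_subset_eq[OF assms(2)] by blast
  then show ?thesis
    using \<sigma> unfolding bij_betw_def by blast
qed

definition transport_cost ::
    "('a \<Rightarrow> 'a \<Rightarrow> real) \<Rightarrow> 'a set \<Rightarrow> 'a set \<Rightarrow> ('a \<Rightarrow> 'a \<Rightarrow> real) \<Rightarrow> real" where
  "transport_cost c S T \<pi> = (\<Sum>u\<in>S. \<Sum>v\<in>T. \<pi> u v * c u v)"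

lemma wasserstein1_eq_Inf_transport_cost:
  "wasserstein1 c S \<mu> T \<nu> = Inf (transport_cost c S T ` Collect (coupling S \<mu> T \<nu>))"
  unfolding wasserstein1_def transport_cost_def by (rule arg_cong[where f = Inf]) blast

lemma coupling_total_mass:
  "coupling S \<mu> T \<nu> \<pi> \<Longrightarrow> (\<Sum>u\<in>S. \<Sum>v\<in>T. \<pi> u v) = sum \<mu> S"
  unfolding coupling_def by (intro sum.cong) auto

lemma coupling_product:
  assumes "sum \<mu> S = 1" and "sum \<nu> T = 1"
    and "\<And>u. u \<in> S \<Longrightarrow> 0 \<le> \<mu> u" and "\<And>v. v \<in> T \<Longrightarrow> 0 \<le> \<nu> v"
  shows "coupling S \<mu> T \<nu> (\<lambda>u v. if u \<in> S \<and> v \<in> T then \<mu> u * \<nu> v else 0)"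
  using assms unfolding coupling_def
  by (auto simp: sum_distrib_left[symmetric] sum_distrib_right[symmetric])

lemma coupling_of_bij_betw:
  assumes \<sigma>: "bij_betw \<sigma> S T" and "finite T" and "0 \<le> w"
    and \<mu>: "\<And>u. u \<in> S \<Longrightarrow> \<mu> u = w" and \<nu>: "\<And>v. v \<in> T \<Longrightarrow> \<nu> v = w"
  shows "coupling S \<mu> T \<nu> (\<lambda>u v. if u \<in> S \<and> v = \<sigma> u then w else 0)"
  unfolding coupling_def
proof (intro conjI allI ballI impI)
  fix u v
  show "0 \<le> (if u \<in> S \<and> v = \<sigma> u then w else 0)"
    using \<open>0 \<le> w\<close> by simp
  assume "u \<notin> S \<or> v \<notin> T"
  then show "(if u \<in> S \<and> v = \<sigma> u then w else 0) = 0"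
    using bij_betw_apply[OF \<sigma>] by auto
next
  fix u assume "u \<in> S"
  then show "(\<Sum>v\<in>T. if u \<in> S \<and> v = \<sigma> u then w else 0) = \<mu> u"
    using \<mu> bij_betw_apply[OF \<sigma>] \<open>finite T\<close> by simp
next
  fix v assume "v \<in> T"
  have "(\<Sum>u\<in>S. if u \<in> S \<and> v = \<sigma> u then w else 0) = (\<Sum>u\<in>S. if v = \<sigma> u then w else 0)"
    by (intro sum.cong) auto
  also have "\<dots> = (\<Sum>v'\<in>T. if v = v' then w else 0)"
    using sum.reindex_bij_betw[OF \<sigma>, of "\<lambda>v'. if v = v' then w else 0"] by simp
  also have "\<dots> = \<nu> v"
    using \<nu> \<open>v \<in> T\<close> \<open>finite T\<close> by simp
  finally show "(\<Sum>u\<in>S. if u \<in> S \<and> v = \<sigma> u then w else 0) = \<nu> v" .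
qed

lemma transport_cost_of_bij_betw:
  assumes "bij_betw \<sigma> S T" and "finite T"
  shows "transport_cost c S T (\<lambda>u v. if u \<in> S \<and> v = \<sigma> u then w else 0)
    = w * (\<Sum>u\<in>S. c u (\<sigma> u))"
  unfolding transport_cost_def sum_distrib_left
proof (intro sum.cong refl)
  fix u assume "u \<in> S"
  then have "(\<Sum>v\<in>T. (if u \<in> S \<and> v = \<sigma> u then w else 0) * c u v)
      = (\<Sum>v\<in>T. if v = \<sigma> u then w * c u (\<sigma> u) else 0)"
    by (intro sum.cong) auto
  also have "\<dots> = w * c u (\<sigma> u)"
    using bij_betw_apply[OF assms(1) \<open>u \<in> S\<close>] assms(2) by simp
  finally show "(\<Sum>v\<in>T. (if u \<in> S \<and> v = \<sigma> u then w else 0) * c u v) = w * c u (\<sigma> u)" .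
qed

locale matching_cost =
  fixes X Y :: "'a set" and \<mu> \<nu> :: "'a \<Rightarrow> real"
    and c :: "'a \<Rightarrow> 'a \<Rightarrow> real" and R :: "'a \<Rightarrow> 'a \<Rightarrow> bool"
  assumes finite_X: "finite X" and finite_Y: "finite Y"
    and X_nonempty: "X \<noteq> {}" and card_Y: "card Y = card X"
    and \<mu>_uniform: "\<And>u. u \<in> X \<Longrightarrow> \<mu> u = 1 / card X"
    and \<nu>_uniform: "\<And>v. v \<in> Y \<Longrightarrow> \<nu> v = 1 / card X"
    and cost_ge_1: "\<And>u v. u \<in> X \<Longrightarrow> v \<in> Y \<Longrightarrow> 1 \<le> c u v"
    and cost_related: "\<And>u v. u \<in> X \<Longrightarrow> v \<in> Y \<Longrightarrow> R u v \<Longrightarrow> c u v = 1"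
    and cost_unrelated: "\<And>u v. u \<in> X \<Longrightarrow> v \<in> Y \<Longrightarrow> \<not> R u v \<Longrightarrow> 2 \<le> c u v"
begin

lemma card_X_pos: "0 < card X"
  using finite_X X_nonempty by (simp add: card_gt_0_iff)

lemma sum_\<mu>: "sum \<mu> X = 1"
  using \<mu>_uniform card_X_pos by simp

lemma sum_\<nu>: "sum \<nu> Y = 1"
  using \<nu>_uniform card_X_pos card_Y by simp

lemma coupling_nonneg: "coupling X \<mu> Y \<nu> \<pi> \<Longrightarrow> 0 \<le> \<pi> u v"
  unfolding coupling_def by blast

lemma coupling_exists: "Collect (coupling X \<mu> Y \<nu>) \<noteq> {}"
  using coupling_product[OF sum_\<mu> sum_\<nu>] \<mu>_uniform \<nu>_uniform by fastforce

lemma transport_cost_ge_1: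
  assumes "coupling X \<mu> Y \<nu> \<pi>"
  shows "1 \<le> transport_cost c X Y \<pi>"
proof -
  have "1 = (\<Sum>u\<in>X. \<Sum>v\<in>Y. \<pi> u v * 1)"
    using coupling_total_mass[OF assms] sum_\<mu> by simp
  also have "\<dots> \<le> transport_cost c X Y \<pi>"
    unfolding transport_cost_def
    by (intro sum_mono mult_left_mono cost_ge_1 coupling_nonneg[OF assms])
  finally show ?thesis .
qed

lemma bdd_below_transport_cost: "bdd_below (transport_cost c X Y ` Collect (coupling X \<mu> Y \<nu>))"
  using transport_cost_ge_1 by (intro bdd_belowI[of _ 1]) blast

lemma wasserstein1_ge_1: "1 \<le> wasserstein1 c X \<mu> Y \<nu>"
  unfolding wasserstein1_eq_Inf_transport_cost
  using coupling_exists transport_cost_ge_1 by (intro cInf_greatest) auto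

lemma wasserstein1_le_1_if_matching:
  assumes "bij_betw \<sigma> X Y" and "\<forall>a\<in>X. R a (\<sigma> a)"
  shows "wasserstein1 c X \<mu> Y \<nu> \<le> 1"
proof -
  define \<pi> where "\<pi> u v = (if u \<in> X \<and> v = \<sigma> u then 1 / real (card X) else 0)" for u v
  have "coupling X \<mu> Y \<nu> \<pi>"
    unfolding \<pi>_def using assms(1) finite_Y \<mu>_uniform \<nu>_uniform
    by (intro coupling_of_bij_betw) auto
  moreover have "transport_cost c X Y \<pi> = 1"
    unfolding \<pi>_def transport_cost_of_bij_betw[OF assms(1) finite_Y]
    using assms card_X_pos bij_betw_apply[OF assms(1)] by (simp add: cost_related)
  ultimately show ?thesis
    unfolding wasserstein1_eq_Inf_transport_cost
    using bdd_below_transport_cost by (metis cInf_lower image_eqI mem_Collect_eq)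
qed

definition related_mass :: "('a \<Rightarrow> 'a \<Rightarrow> real) \<Rightarrow> real" where
  "related_mass \<pi> = (\<Sum>u\<in>X. \<Sum>v\<in>Y. if R u v then \<pi> u v else 0)"

lemma transport_cost_ge_2_minus_related_mass:
  assumes "coupling X \<mu> Y \<nu> \<pi>"
  shows "2 - related_mass \<pi> \<le> transport_cost c X Y \<pi>"
proof -
  have "2 - related_mass \<pi> = 2 * (\<Sum>u\<in>X. \<Sum>v\<in>Y. \<pi> u v) - related_mass \<pi>"
    using coupling_total_mass[OF assms] sum_\<mu> by simp
  also have "\<dots> = (\<Sum>u\<in>X. \<Sum>v\<in>Y. \<pi> u v * (if R u v then 1 else 2))"
    unfolding related_mass_def sum_distrib_left sum_subtractf[symmetric]
    by (intro sum.cong refl) auto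
  also have "\<dots> \<le> transport_cost c X Y \<pi>"
    unfolding transport_cost_def
    using cost_related cost_unrelated
    by (intro sum_mono mult_left_mono coupling_nonneg[OF assms]) auto
  finally show ?thesis .
qed

lemma related_mass_le_if_deficient:
  assumes \<pi>: "coupling X \<mu> Y \<nu> \<pi>" and "S \<subseteq> X"
    and deficient: "card (\<Union>a\<in>S. {v \<in> Y. R a v}) < card S"
  shows "related_mass \<pi> \<le> 1 - 1 / card X"
proof -
  define G where "G = (\<Union>a\<in>S. {v \<in> Y. R a v})"
  have "G \<subseteq> Y"
    unfolding G_def by blast
  have rows: "(\<Sum>v\<in>Y. \<pi> u v) = 1 / card X" if "u \<in> X" for u
    using \<pi> \<mu>_uniform that unfolding coupling_def by simp
  have cols: "(\<Sum>u\<in>X. \<pi> u v) = 1 / card X" if "v \<in> Y" for v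
    using \<pi> \<nu>_uniform that unfolding coupling_def by simp
  have outside: "(\<Sum>u\<in>X - S. \<Sum>v\<in>Y. if R u v then \<pi> u v else 0) \<le> card (X - S) / card X"
  proof -
    have "(\<Sum>u\<in>X - S. \<Sum>v\<in>Y. if R u v then \<pi> u v else 0) \<le> (\<Sum>u\<in>X - S. \<Sum>v\<in>Y. \<pi> u v)"
      by (intro sum_mono) (simp add: coupling_nonneg[OF \<pi>])
    also have "\<dots> = card (X - S) / card X"
      using rows by simp
    finally show ?thesis .
  qed
  have inside: "(\<Sum>u\<in>S. \<Sum>v\<in>Y. if R u v then \<pi> u v else 0) \<le> card G / card X"
  proof -
    have "(\<Sum>u\<in>S. \<Sum>v\<in>Y. if R u v then \<pi> u v else 0) \<le> (\<Sum>u\<in>S. \<Sum>v\<in>Y. if v \<in> G then \<pi> u v else 0)"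
      unfolding G_def by (intro sum_mono) (auto simp: coupling_nonneg[OF \<pi>])
    also have "\<dots> = (\<Sum>u\<in>S. \<Sum>v\<in>G. \<pi> u v)"
      using \<open>G \<subseteq> Y\<close> by (simp add: sum.inter_restrict[OF finite_Y, symmetric] Int_absorb1)
    also have "\<dots> \<le> (\<Sum>u\<in>X. \<Sum>v\<in>G. \<pi> u v)"
      using \<open>S \<subseteq> X\<close> finite_X by (intro sum_mono2 sum_nonneg coupling_nonneg[OF \<pi>])
    also have "\<dots> = (\<Sum>v\<in>G. \<Sum>u\<in>X. \<pi> u v)"
      by (rule sum.swap)
    also have "\<dots> = card G / card X"
      using cols \<open>G \<subseteq> Y\<close> by (simp add: subset_iff)
    finally show ?thesis .
  qed
  have split: "related_mass \<pi> = (\<Sum>u\<in>X - S. \<Sum>v\<in>Y. if R u v then \<pi> u v else 0)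
      + (\<Sum>u\<in>S. \<Sum>v\<in>Y. if R u v then \<pi> u v else 0)"
    unfolding related_mass_def by (rule sum.subset_diff[OF \<open>S \<subseteq> X\<close> finite_X])
  have "card (X - S) + card G + 1 \<le> card X"
    using deficient \<open>S \<subseteq> X\<close> finite_X card_mono[OF finite_X \<open>S \<subseteq> X\<close>]
    unfolding G_def by (simp add: card_Diff_subset[OF rev_finite_subset[OF finite_X]])
  then have "real (card (X - S)) + card G \<le> real (card X) - 1"
    by linarith
  have "related_mass \<pi> \<le> (real (card (X - S)) + card G) / card X"
    using split outside inside by (simp add: add_divide_distrib)
  also have "\<dots> \<le> (real (card X) - 1) / card X"
    using \<open>real (card (X - S)) + card G \<le> real (card X) - 1\<close> by (simp add: divide_right_mono)
  also have "\<dots> = 1 - 1 / card X"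
    using card_X_pos by (simp add: diff_divide_distrib)
  finally show ?thesis .
qed

lemma wasserstein1_ge_if_no_matching:
  assumes no_matching: "\<nexists>\<sigma>. bij_betw \<sigma> X Y \<and> (\<forall>a\<in>X. R a (\<sigma> a))"
  shows "1 + 1 / card X \<le> wasserstein1 c X \<mu> Y \<nu>"
proof -
  have "\<not> hall_condition X (\<lambda>a. {v \<in> Y. R a v})"
    using no_matching perfect_matching_if_hall_condition[OF finite_X finite_Y card_Y[symmetric], of R]
    by blast
  then obtain S where S: "S \<subseteq> X" and deficient: "card (\<Union>a\<in>S. {v \<in> Y. R a v}) < card S"
    unfolding hall_condition_def by (auto simp: not_le)
  have "1 + 1 / card X \<le> transport_cost c X Y \<pi>" if "coupling X \<mu> Y \<nu> \<pi>" for \<pi>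
    using transport_cost_ge_2_minus_related_mass[OF that]
      related_mass_le_if_deficient[OF that S deficient] by linarith
  then show ?thesis
    unfolding wasserstein1_eq_Inf_transport_cost using coupling_exists
    by (intro cInf_greatest) auto
qed

theorem wasserstein1_eq_1_iff_perfect_matching:
  "wasserstein1 c X \<mu> Y \<nu> = 1 \<longleftrightarrow> (\<exists>\<sigma>. bij_betw \<sigma> X Y \<and> (\<forall>a\<in>X. R a (\<sigma> a)))"
proof
  assume W: "wasserstein1 c X \<mu> Y \<nu> = 1"
  show "\<exists>\<sigma>. bij_betw \<sigma> X Y \<and> (\<forall>a\<in>X. R a (\<sigma> a))"
  proof (rule ccontr)
    assume "\<nexists>\<sigma>. bij_betw \<sigma> X Y \<and> (\<forall>a\<in>X. R a (\<sigma> a))"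
    then have "1 + 1 / card X \<le> 1"
      using wasserstein1_ge_if_no_matching W by simp
    then show False
      using card_X_pos by simp
  qed
next
  assume "\<exists>\<sigma>. bij_betw \<sigma> X Y \<and> (\<forall>a\<in>X. R a (\<sigma> a))"
  then show "wasserstein1 c X \<mu> Y \<nu> = 1"
    using wasserstein1_le_1_if_matching wasserstein1_ge_1 by (meson antisym)
qed

end

lemma gdist_walk:
  assumes "connected_graph E"
  obtains p where "walk E p" "hd p = u" "last p = v" "length p = Suc (gdist E u v)"
proof -
  obtain p where p: "walk E p" "hd p = u" "last p = v"
    using assms unfolding connected_graph_def by blast
  then have "\<exists>n p. walk E p \<and> hd p = u \<and> last p = v \<and> length p = Suc n"
    by (intro exI[of _ "length p - 1"] exI[of _ p]) (auto simp: walk_def)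
  then have "\<exists>p. walk E p \<and> hd p = u \<and> last p = v \<and> length p = Suc (gdist E u v)"
    unfolding gdist_def by (rule LeastI_ex)
  then show ?thesis
    using that by blast
qed

lemma gdist_le_1_if_adjacent: "E u v \<Longrightarrow> gdist E u v \<le> 1"
  unfolding gdist_def
  by (rule Least_le, rule exI[of _ "[u, v]"]) (auto simp: walk_def less_Suc_eq)

lemma gdist_ge_1_if_distinct:
  assumes "connected_graph E" and "u \<noteq> v"
  shows "1 \<le> gdist E u v"
proof (rule ccontr)
  assume "\<not> 1 \<le> gdist E u v"
  then obtain p where "walk E p" "hd p = u" "last p = v" "length p = 1"
    using gdist_walk[OF assms(1)] by (metis One_nat_def less_one not_le)
  then show False
    using \<open>u \<noteq> v\<close> by (cases p) auto
qed

lemma gdist_ge_2_if_not_adjacent: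
  assumes "connected_graph E" and "u \<noteq> v" and "\<not> E u v"
  shows "2 \<le> gdist E u v"
proof (rule ccontr)
  assume "\<not> 2 \<le> gdist E u v"
  then have "gdist E u v = 1"
    using gdist_ge_1_if_distinct[OF assms(1,2)] by linarith
  then obtain p where p: "walk E p" "hd p = u" "last p = v" "length p = 2"
    using gdist_walk[OF assms(1)] by (metis numeral_2_eq_2 One_nat_def)
  then obtain a b where "p = [a, b]"
    by (auto simp: length_Suc_conv numeral_2_eq_2)
  then show False
    using p \<open>\<not> E u v\<close> unfolding walk_def by auto
qed

lemma cycle_triangle:
  assumes "simple_graph E" and "E x y" "E y z" "E z x"
  shows "cycle E [x, y, z]"
proof -
  have "x \<noteq> y" "y \<noteq> z" "z \<noteq> x"
    using assms unfolding simple_graph_def by blast+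
  moreover have "walk E [x, y, z]"
    using assms(2,3) unfolding walk_def by (auto simp: less_Suc_eq)
  ultimately show ?thesis
    using assms(4) unfolding cycle_def by auto
qed

lemma girth_le_3_if_triangle:
  assumes "simple_graph E" and "E x y" "E y z" "E z x"
  shows "girth E \<le> 3"
proof -
  have "girth E \<le> enat (length [x, y, z])"
    unfolding girth_def using cycle_triangle[OF assms] by (blast intro: Inf_lower)
  then show ?thesis
    by (simp add: numeral_eq_enat numeral_3_eq_3)
qed

lemma adjacent_nbhds_disjoint:
  assumes "simple_graph E" and "3 < girth E" and "E x y"
  shows "nbhd E x \<inter> nbhd E y = {}"
proof -
  have "\<not> (E x z \<and> E y z)" for z
    using girth_le_3_if_triangle[OF assms(1,3), of z] assms(1,2) unfolding simple_graph_def
    by (metis leD)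
  then show ?thesis
    unfolding nbhd_def by blast
qed

lemma matching_cost_adjacent_nbhds:
  assumes "simple_graph E" and "locally_finite E" and "connected_graph E"
    and "3 < girth E" and "E x y" and "degree E x = degree E y"
  shows "matching_cost (nbhd E x) (nbhd E y) (unif_nbhd E x) (unif_nbhd E y)
    (\<lambda>u v. real (gdist E u v)) E"
proof
  have distinct: "u \<noteq> v" if "u \<in> nbhd E x" "v \<in> nbhd E y" for u v
    using adjacent_nbhds_disjoint[OF assms(1,4,5)] that by blast
  show "finite (nbhd E x)" "finite (nbhd E y)"
    using assms(2) unfolding locally_finite_def by auto
  show "nbhd E x \<noteq> {}"
    using assms(5) unfolding nbhd_def by blast
  show "card (nbhd E y) = card (nbhd E x)"
    using assms(6) unfolding degree_def by simp
  show "unif_nbhd E x u = 1 / card (nbhd E x)" if "u \<in> nbhd E x" for u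
    using that unfolding unif_nbhd_def degree_def by simp
  show "unif_nbhd E y v = 1 / card (nbhd E x)" if "v \<in> nbhd E y" for v
    using that assms(6) unfolding unif_nbhd_def degree_def by simp
  fix u v assume uv: "u \<in> nbhd E x" "v \<in> nbhd E y"
  show "1 \<le> real (gdist E u v)"
    using gdist_ge_1_if_distinct[OF assms(3) distinct[OF uv]] by simp
  show "real (gdist E u v) = 1" if "E u v"
    using gdist_ge_1_if_distinct[OF assms(3) distinct[OF uv]] gdist_le_1_if_adjacent[of E, OF that]
    by simp
  show "2 \<le> real (gdist E u v)" if "\<not> E u v"
    using gdist_ge_2_if_not_adjacent[OF assms(3) distinct[OF uv] that] by simp
qed

theorem corollary4p3:
  fixes E :: "'a \<Rightarrow> 'a \<Rightarrow> bool" and x y :: 'a and d :: nat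
  assumes "simple_graph E" and "locally_finite E" and "connected_graph E"
    and "girth E = 4"
    and "E x y" and "degree E x = d" and "degree E y = d"
  shows "ollivier_curv E x y = 0 \<longleftrightarrow>
    (\<exists>\<sigma>. bij_betw \<sigma> (nbhd E x) (nbhd E y) \<and> (\<forall>a\<in>nbhd E x. E a (\<sigma> a)))"
proof -
  have "3 < girth E"
    using assms(4) by (simp add: numeral_eq_enat)
  then interpret matching_cost "nbhd E x" "nbhd E y" "unif_nbhd E x" "unif_nbhd E y"
      "\<lambda>u v. real (gdist E u v)" E
    using assms by (intro matching_cost_adjacent_nbhds) simp_all
  show ?thesis
    unfolding ollivier_curv_def using wasserstein1_eq_1_iff_perfect_matching by auto
qed

end
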